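(* Let $T$ be a reflection factorization of length $\ell$ with entries reflections of $G_6$, having at least two entries in $R'$ and at least two entries in $S$. Then for any reflection $x$ whose conjugacy class (among $R_1,R_1^{-1},S$) contains some entry of $T$, the Hurwitz orbit of $T$ contains a factorization whose right-most entry is $x$ and whose first $\ell-1$ entries generate $G_6$.
   Context: Let $G_7$ be the subgroup of $GL_2(\mathbb{C})$ generated by $s=\begin{bmatrix}1&0\\0&-1\end{bmatrix}$, $t=\frac14\begin{bmatrix}(1+\sqrt3)+(-1+\sqrt3)i & (1+\sqrt3)+(-1+\sqrt3)i\\ (-1+\sqrt3)-(1+\sqrt3)i & (1-\sqrt3)+(1+\sqrt3)i\end{bmatrix}$ and $u=t^{\top}$ (presentation $\langle s,t,u\mid s^2=t^3=u^3=1,\ stu=ust=tus\rangle$, order $144$). A reflection is a linear map of $\mathbb{C}^2$ whose fixed space has dimension $1$. Let $S$ be the $G_7$-conjugacy class of $s$ (six reflections of order $2$), $R_1$ the $G_7$-conjugacy class of $t$ (four reflections of order $3$), $R_1^{-1}=\{r^{-1}:r\in R_1\}$ and $R'=R_1\cup R_1^{-1}$. Let $G_6=\langle s,t\rangle$, of order $48$; its fourteen reflections are the elements of $R_1\cup R_1^{-1}\cup S$, and $R_1$, $R_1^{-1}$, $S$ are its reflection conjugacy classes. A reflection factorization of length $\ell$ is a tuple $(r_1,\dots,r_\ell)$ of reflections; a set of entries generates the subgroup they generate. The Hurwitz move $\sigma_i$ sends $(r_1,\dots,r_\ell)$ to $(r_1,\dots,r_{i-1},r_{i+1},r_{i+1}^{-1}r_ir_{i+1},r_{i+2},\dots,r_\ell)$;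 the Hurwitz orbit of $T$ is the set of factorizations obtained from $T$ by finite sequences of Hurwitz moves. *)

theory Defs
  imports "HOL-Analysis.Analysis"
begin

type_synonym cmat = "complex^2^2"

definition mat_s :: cmat where
  "mat_s = vector [vector [1, 0], vector [0, -1]]"

definition mat_t :: cmat where
  "mat_t = (1/4) *\<^sub>R vector
     [vector [Complex (1 + sqrt 3) (-1 + sqrt 3), Complex (1 + sqrt 3) (-1 + sqrt 3)],
      vector [Complex (-1 + sqrt 3) (-(1 + sqrt 3)), Complex (1 - sqrt 3) (1 + sqrt 3)]]"

definition mat_u :: cmat where
  "mat_u = transpose mat_t"

inductive_set gen_group :: "cmat set \<Rightarrow> cmat set" for A :: "cmat set" where
  gen_one: "mat 1 \<in> gen_group A"
| gen_base: "a \<in> A \<Longrightarrow> a \<in> gen_group A"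
| gen_mult: "x \<in> gen_group A \<Longrightarrow> y \<in> gen_group A \<Longrightarrow> x ** y \<in> gen_group A"
| gen_inv: "x \<in> gen_group A \<Longrightarrow> matrix_inv x \<in> gen_group A"

definition G7 :: "cmat set" where "G7 = gen_group {mat_s, mat_t, mat_u}"
definition G6 :: "cmat set" where "G6 = gen_group {mat_s, mat_t}"

definition is_reflection :: "cmat \<Rightarrow> bool" where
  "is_reflection M \<longleftrightarrow> invertible M \<and>
     (\<exists>v::complex^2. v \<noteq> 0 \<and> {w. M *v w = w} = {c *s v | c. True})"

definition conj_class7 :: "cmat \<Rightarrow> cmat set" where
  "conj_class7 r = {g ** r ** matrix_inv g | g. g \<in> G7}"

definition S_cls :: "cmat set" where "S_cls = conj_class7 mat_s"
definition R1 :: "cmat set" where "R1 = conj_class7 mat_t"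
definition R1inv :: "cmat set" where "R1inv = matrix_inv ` R1"
definition Rprime :: "cmat set" where "Rprime = R1 \<union> R1inv"

text \<open>Hurwitz move sigma_(i+1) (0-based index i, requires i+1 < length T).\<close>
definition hurwitz :: "nat \<Rightarrow> cmat list \<Rightarrow> cmat list" where
  "hurwitz i T = T[i := T ! (i+1), i+1 := matrix_inv (T ! (i+1)) ** (T ! i) ** (T ! (i+1))]"

definition hurwitz_step :: "cmat list \<Rightarrow> cmat list \<Rightarrow> bool" where
  "hurwitz_step T T' \<longleftrightarrow> (\<exists>i. i + 1 < length T \<and> T' = hurwitz i T)"

definition hurwitz_orbit :: "cmat list \<Rightarrow> cmat list set" where
  "hurwitz_orbit T = {T'. hurwitz_step\<^sup>*\<^sup>* T T'}"

definition count_in :: "cmat set \<Rightarrow> cmat list \<Rightarrow> nat" where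
  "count_in C T = card {i. i < length T \<and> T ! i \<in> C}"

end

theory Submission
  imports Defs
begin

text \<open>
  A Hurwitz move changes an entry only by conjugating it with another entry. Hence the number
  of entries in each G6-conjugacy class is invariant along a Hurwitz orbit, and any chosen entry
  can be carried to the right end while staying in its class. Carry an entry of S, an entry
  of R' and an entry of the class C of x to the right end. On these last three strands the
  last entry can be turned into any element x of C: simultaneous conjugation commutes with
  Hurwitz moves and S, R1, R1^-1 are G7-classes, so one may assume that the first of the three
  entries is s, and what remains is a finite computation in an exact integer model of G7.
  Finally, every factorization in the orbit still has two entries in S and two in R', so its
  first l-1 entries contain one of each, and an element of S together with an element of R'
  always generates G6.
\<close>

section \<open>Inverse matrices\<close>

lemma matrix_inv_inverse:
  fixes A :: "'a::semiring_1^'n^'n"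
  assumes "invertible A"
  shows matrix_inv_right: "A ** matrix_inv A = mat 1"
    and matrix_inv_left: "matrix_inv A ** A = mat 1"
  using someI_ex[OF assms[unfolded invertible_def]] unfolding matrix_inv_def by blast+

lemma matrix_inv_unique:
  fixes A B :: "'a::semiring_1^'n^'n"
  assumes "A ** B = mat 1" "B ** A = mat 1"
  shows "matrix_inv A = B"
proof -
  have "invertible A" using assms unfolding invertible_def by blast
  then have "B = (matrix_inv A ** A) ** B" by (simp add: matrix_inv_left)
  also have "\<dots> = matrix_inv A" using assms(1) by (simp flip: matrix_mul_assoc)
  finally show ?thesis by simp
qed

lemma invertible_matrix_inv:
  fixes A :: "'a::semiring_1^'n^'n"
  shows "invertible A \<Longrightarrow> invertible (matrix_inv A)"
  using matrix_inv_left matrix_inv_right unfolding invertible_def by blast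

lemma matrix_inv_matrix_inv:
  fixes A :: "'a::semiring_1^'n^'n"
  shows "invertible A \<Longrightarrow> matrix_inv (matrix_inv A) = A"
  by (intro matrix_inv_unique matrix_inv_left matrix_inv_right)

lemma matrix_inv_mult:
  fixes A B :: "'a::semiring_1^'n^'n"
  assumes "invertible A" "invertible B"
  shows "matrix_inv (A ** B) = matrix_inv B ** matrix_inv A"
proof (rule matrix_inv_unique)
  have "A ** B ** (matrix_inv B ** matrix_inv A) = A ** (B ** matrix_inv B) ** matrix_inv A"
    by (simp add: matrix_mul_assoc)
  then show "A ** B ** (matrix_inv B ** matrix_inv A) = mat 1"
    using assms by (simp add: matrix_inv_right)
  have "matrix_inv B ** matrix_inv A ** (A ** B) = matrix_inv B ** (matrix_inv A ** A) ** B"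
    by (simp add: matrix_mul_assoc)
  then show "matrix_inv B ** matrix_inv A ** (A ** B) = mat 1"
    using assms by (simp add: matrix_inv_left)
qed

lemma matrix_inv_conj:
  fixes g m :: "'a::semiring_1^'n^'n"
  assumes "invertible g" "invertible m"
  shows "matrix_inv (matrix_inv g ** m ** g) = matrix_inv g ** matrix_inv m ** g"
  using assms by (simp add: matrix_inv_mult invertible_mult invertible_matrix_inv
      matrix_inv_matrix_inv matrix_mul_assoc)

lemma conj_conj_inverse:
  fixes g m :: "'a::semiring_1^'n^'n"
  assumes "invertible g"
  shows "matrix_inv (matrix_inv g) ** (matrix_inv g ** m ** g) ** matrix_inv g = m"
proof -
  have "matrix_inv (matrix_inv g) ** (matrix_inv g ** m ** g) ** matrix_inv g
      = (g ** matrix_inv g) ** m ** (g ** matrix_inv g)"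
    using assms by (simp add: matrix_inv_matrix_inv matrix_mul_assoc)
  then show ?thesis using assms by (simp add: matrix_inv_right)
qed

section \<open>Generated groups and Hurwitz moves\<close>

lemma gen_group_least:
  assumes "A \<subseteq> gen_group B"
  shows "gen_group A \<subseteq> gen_group B"
proof
  fix x assume "x \<in> gen_group A"
  then show "x \<in> gen_group B" by induction (use assms in \<open>auto intro: gen_group.intros\<close>)
qed

lemma invertible_gen_group:
  assumes "\<forall>a\<in>A. invertible a" "x \<in> gen_group A"
  shows "invertible x"
  using assms(2)
proof induction
  case gen_one
  show ?case unfolding invertible_def by (auto intro: exI[of _ "mat 1"])
qed (use assms(1) invertible_mult invertible_matrix_inv in auto)

lemma conj_in_gen_group:
  "g \<in> gen_group A \<Longrightarrow> r \<in> gen_group A \<Longrightarrow> matrix_inv g ** r ** g \<in> gen_group A"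
  by (auto intro: gen_group.intros)

definition conj_closed :: "cmat set \<Rightarrow> cmat set \<Rightarrow> bool" where
  "conj_closed H C \<longleftrightarrow> (\<forall>r\<in>C. \<forall>g\<in>H. matrix_inv g ** r ** g \<in> C)"

lemma conj_closed_subset: "conj_closed H C \<Longrightarrow> H' \<subseteq> H \<Longrightarrow> conj_closed H' C"
  unfolding conj_closed_def by blast

lemma conj_closed_conj_iff:
  assumes "conj_closed (gen_group A) C" "\<forall>a\<in>A. invertible a" "g \<in> gen_group A"
  shows "matrix_inv g ** r ** g \<in> C \<longleftrightarrow> r \<in> C"
proof
  assume "matrix_inv g ** r ** g \<in> C"
  moreover have "matrix_inv g \<in> gen_group A" using assms(3) by (rule gen_inv)
  ultimately have "matrix_inv (matrix_inv g) ** (matrix_inv g ** r ** g) ** matrix_inv g \<in> C"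
    using assms(1) unfolding conj_closed_def by blast
  then show "r \<in> C" using conj_conj_inverse invertible_gen_group assms(2,3) by metis
qed (use assms(1,3) conj_closed_def in blast)

lemma length_hurwitz [simp]: "length (hurwitz i T) = length T"
  unfolding hurwitz_def by simp

lemma hurwitz_append: "i + 1 < length U \<Longrightarrow> hurwitz (length P + i) (P @ U) = P @ hurwitz i U"
  unfolding hurwitz_def by (simp add: list_update_append nth_append)

lemma hurwitz_step_append:
  assumes "hurwitz_step\<^sup>*\<^sup>* U U'"
  shows "hurwitz_step\<^sup>*\<^sup>* (P @ U) (P @ U')"
  using assms
proof (induction rule: rtranclp_induct)
  case (step V V')
  then obtain i where "i + 1 < length V" "V' = hurwitz i V" unfolding hurwitz_step_def by blast
  then have "hurwitz_step (P @ V) (P @ V')"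
    unfolding hurwitz_step_def by (intro exI[of _ "length P + i"]) (simp add: hurwitz_append)
  with step.IH show ?case by (rule rtranclp.rtrancl_into_rtrancl)
qed simp

lemma hurwitz_step_length: "hurwitz_step\<^sup>*\<^sup>* T T' \<Longrightarrow> length T' = length T"
  by (induction rule: rtranclp_induct) (auto simp: hurwitz_step_def)

lemma hurwitz_gen_group:
  assumes "set T \<subseteq> gen_group A" "i + 1 < length T"
  shows "set (hurwitz i T) \<subseteq> gen_group A"
proof -
  have "T ! i \<in> gen_group A" "T ! (i + 1) \<in> gen_group A" using assms by auto
  then have "matrix_inv (T ! (i + 1)) ** T ! i ** T ! (i + 1) \<in> gen_group A"
    by (rule conj_in_gen_group[rotated])
  then show ?thesis unfolding hurwitz_def
    using set_update_subset_insert[of "T[i := T ! (i + 1)]" "i + 1"] set_update_subset_insert[of T i]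
      \<open>T ! (i + 1) \<in> gen_group A\<close> assms(1) by blast
qed

lemma hurwitz_step_gen_group:
  "hurwitz_step\<^sup>*\<^sup>* T T' \<Longrightarrow> set T \<subseteq> gen_group A \<Longrightarrow> set T' \<subseteq> gen_group A"
  by (induction rule: rtranclp_induct) (auto simp: hurwitz_step_def dest: hurwitz_gen_group)

lemma count_in_conv_length_filter: "count_in C T = length (filter (\<lambda>r. r \<in> C) T)"
  unfolding count_in_def by (simp add: length_filter_conv_card)

lemma count_in_conv_count_mset: "count_in C T = count (mset (map (\<lambda>r. r \<in> C) T)) True"
  unfolding count_in_conv_length_filter by (induction T) auto

lemma count_in_hurwitz:
  assumes "conj_closed (gen_group A) C" "\<forall>a\<in>A. invertible a"
    and "set T \<subseteq> gen_group A" "i + 1 < length T"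
  shows "count_in C (hurwitz i T) = count_in C T"
proof -
  let ?m = "map (\<lambda>r. r \<in> C) T"
  have "T ! (i + 1) \<in> gen_group A" using assms(3,4) by auto
  then have "(matrix_inv (T ! (i + 1)) ** T ! i ** T ! (i + 1) \<in> C) = (T ! i \<in> C)"
    by (rule conj_closed_conj_iff[OF assms(1,2)])
  then have "map (\<lambda>r. r \<in> C) (hurwitz i T) = ?m[i := ?m ! (i + 1), i + 1 := ?m ! i]"
    using assms(4) by (simp add: hurwitz_def map_update)
  then show ?thesis
    unfolding count_in_conv_count_mset using mset_swap[of "i + 1" ?m i] assms(4) by simp
qed

lemma count_in_hurwitz_step:
  assumes "hurwitz_step\<^sup>*\<^sup>* T T'" "conj_closed (gen_group A) C" "\<forall>a\<in>A. invertible a"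
    and "set T \<subseteq> gen_group A"
  shows "count_in C T' = count_in C T"
  using assms(1,4)
proof (induction rule: rtranclp_induct)
  case (step V V')
  then obtain i where "i + 1 < length V" "V' = hurwitz i V" unfolding hurwitz_step_def by blast
  moreover have "set V \<subseteq> gen_group A" using step hurwitz_step_gen_group by blast
  ultimately show ?case using step count_in_hurwitz[OF assms(2,3)] by simp
qed simp

lemma hurwitz_move_to_end:
  assumes "set (P @ a # Q) \<subseteq> gen_group A" "\<forall>a\<in>A. invertible a"
  shows "\<exists>g\<in>gen_group A. hurwitz_step\<^sup>*\<^sup>* (P @ a # Q) (P @ Q @ [matrix_inv g ** a ** g])"
  using assms(1)
proof (induction Q arbitrary: P a)
  case Nil
  have "matrix_inv (mat 1 :: cmat) = mat 1" by (rule matrix_inv_unique) simp_all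
  then show ?case by (intro bexI[of _ "mat 1"]) (simp_all add: gen_one)
next
  case (Cons b Q)
  define a' where "a' = matrix_inv b ** a ** b"
  have b: "b \<in> gen_group A" and "a \<in> gen_group A" using Cons.prems by auto
  then have "a' \<in> gen_group A" unfolding a'_def by (rule conj_in_gen_group)
  then have "set ((P @ [b]) @ a' # Q) \<subseteq> gen_group A" using Cons.prems by auto
  then obtain g where g: "g \<in> gen_group A"
    and steps: "hurwitz_step\<^sup>*\<^sup>* ((P @ [b]) @ a' # Q) ((P @ [b]) @ Q @ [matrix_inv g ** a' ** g])"
    using Cons.IH by blast
  have "hurwitz 0 (a # b # Q) = b # a' # Q" unfolding hurwitz_def a'_def by simp
  then have "hurwitz_step (P @ a # b # Q) ((P @ [b]) @ a' # Q)"
    unfolding hurwitz_step_def using hurwitz_append[of 0 "a # b # Q" P]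
    by (intro exI[of _ "length P"]) simp
  with steps have "hurwitz_step\<^sup>*\<^sup>* (P @ a # b # Q) (P @ (b # Q) @ [matrix_inv g ** a' ** g])"
    by (simp add: converse_rtranclp_into_rtranclp)
  moreover have "matrix_inv g ** a' ** g = matrix_inv (b ** g) ** a ** (b ** g)"
    using invertible_gen_group[OF assms(2)] b g
    by (simp add: a'_def matrix_inv_mult matrix_mul_assoc)
  moreover have "b ** g \<in> gen_group A" using b g by (rule gen_mult)
  ultimately show ?case by auto
qed

lemma hurwitz_moves_to_end:
  assumes "mset L \<subseteq># mset T" "set T \<subseteq> gen_group A" "\<forall>a\<in>A. invertible a"
  shows "\<exists>P L'. hurwitz_step\<^sup>*\<^sup>* T (P @ L') \<and> mset P + mset L = mset T \<and>
    list_all2 (\<lambda>a z. \<exists>g\<in>gen_group A. z = matrix_inv g ** a ** g) L L'"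
  using assms(1)
proof (induction L rule: rev_induct)
  case Nil
  show ?case by (intro exI[of _ T] exI[of _ "[]"]) simp
next
  case (snoc a L)
  have "mset L \<subseteq># mset (L @ [a])" by simp
  then obtain P L' where steps: "hurwitz_step\<^sup>*\<^sup>* T (P @ L')" and P: "mset P + mset L = mset T"
    and L': "list_all2 (\<lambda>a z. \<exists>g\<in>gen_group A. z = matrix_inv g ** a ** g) L L'"
    using snoc subset_mset.order_trans by blast
  have "add_mset a (mset L) \<subseteq># mset P + mset L" using snoc.prems P by simp
  then have "a \<in> set P" by (simp add: subset_mset.add_le_cancel_right[of "{#a#}" "mset L", simplified])
  then obtain P1 P2 where P12: "P = P1 @ a # P2" by (meson split_list)
  have "set (P1 @ a # (P2 @ L')) \<subseteq> gen_group A"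
    using hurwitz_step_gen_group[OF steps assms(2)] P12 by simp
  then obtain g where "g \<in> gen_group A"
    and "hurwitz_step\<^sup>*\<^sup>* (P1 @ a # (P2 @ L')) (P1 @ (P2 @ L') @ [matrix_inv g ** a ** g])"
    using hurwitz_move_to_end assms(3) by blast
  with steps P12 have "hurwitz_step\<^sup>*\<^sup>* T ((P1 @ P2) @ (L' @ [matrix_inv g ** a ** g]))"
    by (simp add: rtranclp_trans)
  moreover have "mset (P1 @ P2) + mset (L @ [a]) = mset T" using P P12 by simp
  moreover have "list_all2 (\<lambda>a z. \<exists>g\<in>gen_group A. z = matrix_inv g ** a ** g) (L @ [a])
      (L' @ [matrix_inv g ** a ** g])"
    using L' \<open>g \<in> gen_group A\<close> by (intro list_all2_appendI) auto
  ultimately show ?case by blast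
qed

lemma hurwitz_map_conj:
  assumes "invertible g" "\<forall>r\<in>set T. invertible r" "i + 1 < length T"
  shows "hurwitz i (map (\<lambda>m. matrix_inv g ** m ** g) T)
       = map (\<lambda>m. matrix_inv g ** m ** g) (hurwitz i T)"
proof -
  have cancel: "X ** g ** matrix_inv g = X" for X :: cmat
    using assms(1) matrix_inv_inverse by (metis matrix_mul_assoc matrix_mul_rid)
  have "invertible (T ! (i + 1))" using assms(2,3) by simp
  then have "matrix_inv (matrix_inv g ** T ! (i + 1) ** g) ** (matrix_inv g ** T ! i ** g)
        ** (matrix_inv g ** T ! (i + 1) ** g)
      = matrix_inv g ** (matrix_inv (T ! (i + 1)) ** T ! i ** T ! (i + 1)) ** g"
    using assms(1) by (simp add: matrix_inv_conj matrix_mul_assoc cancel)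
  then show ?thesis using assms(3) by (simp add: hurwitz_def map_update)
qed

lemma hurwitz_step_map_conj:
  assumes "hurwitz_step\<^sup>*\<^sup>* T T'" "set T \<subseteq> gen_group A" "\<forall>a\<in>A. invertible a" "invertible g"
  shows "hurwitz_step\<^sup>*\<^sup>* (map (\<lambda>m. matrix_inv g ** m ** g) T) (map (\<lambda>m. matrix_inv g ** m ** g) T')"
  using assms(1)
proof (induction rule: rtranclp_induct)
  case (step V V')
  then obtain i where i: "i + 1 < length V" "V' = hurwitz i V" unfolding hurwitz_step_def by blast
  have "\<forall>r\<in>set V. invertible r"
    using hurwitz_step_gen_group[OF step.hyps(1) assms(2)] invertible_gen_group[OF assms(3)] by blast
  then have "hurwitz_step (map (\<lambda>m. matrix_inv g ** m ** g) V) (map (\<lambda>m. matrix_inv g ** m ** g) V')"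
    unfolding hurwitz_step_def using i hurwitz_map_conj[OF assms(4)] by (intro exI[of _ i]) simp
  with step.IH show ?case by (rule rtranclp.rtrancl_into_rtrancl)
qed simp

section \<open>An integer model of G7\<close>

type_synonym quat = "int \<times> int \<times> int \<times> int"
type_synonym elt = "int \<times> quat"

text \<open>
  The element (k, (a, b, c, d)) stands for zeta^k (a + b I + c J + d K) / 2 with
  zeta = exp(pi i / 6), quaternions being realised as complex 2 x 2 matrices by qmat. Only
  doubled Hurwitz units occur, and for them the halved products in emul are exact. The
  representation is not unique: k matters only modulo 12, and (k + 6, -q) represents the same
  matrix as (k, q); enorm chooses a canonical representative.
\<close>

definition qmat :: "complex \<Rightarrow> complex \<Rightarrow> complex \<Rightarrow> complex \<Rightarrow> complex \<Rightarrow> cmat" where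
  "qmat z a b c d = vector [vector [z * (a + \<i> * b) / 2, z * (c + \<i> * d) / 2],
                             vector [z * (- c + \<i> * d) / 2, z * (a - \<i> * b) / 2]]"

fun emat :: "elt \<Rightarrow> cmat" where
  "emat (k, a, b, c, d) = qmat (cis (of_int k * pi / 6)) (of_int a) (of_int b) (of_int c) (of_int d)"

fun qprod :: "quat \<Rightarrow> quat \<Rightarrow> quat" where
  "qprod (a1, b1, c1, d1) (a2, b2, c2, d2) =
     (a1*a2 - b1*b2 - c1*c2 - d1*d2, a1*b2 + b1*a2 + c1*d2 - d1*c2,
      a1*c2 - b1*d2 + c1*a2 + d1*b2, a1*d2 + b1*c2 - c1*b2 + d1*a2)"

fun qeven :: "quat \<Rightarrow> bool" where
  "qeven (a, b, c, d) \<longleftrightarrow> even a \<and> even b \<and> even c \<and> even d"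

fun qhalf :: "quat \<Rightarrow> quat" where
  "qhalf (a, b, c, d) = (a div 2, b div 2, c div 2, d div 2)"

fun emul :: "elt \<Rightarrow> elt \<Rightarrow> elt" where
  "emul (k1, q1) (k2, q2) = (k1 + k2, qhalf (qprod q1 q2))"

fun einv :: "elt \<Rightarrow> elt" where
  "einv (k, a, b, c, d) = (- k, a, - b, - c, - d)"

definition eone :: elt where
  "eone = (0, 2, 0, 0, 0)"

fun enorm :: "elt \<Rightarrow> elt" where
  "enorm (k, a, b, c, d) =
     (if k mod 12 < 6 then (k mod 12, a, b, c, d) else (k mod 12 - 6, - a, - b, - c, - d))"

definition hurwitz_units :: "quat list" where
  "hurwitz_units =
     [(-2,0,0,0), (2,0,0,0), (0,-2,0,0), (0,2,0,0), (0,0,-2,0), (0,0,2,0), (0,0,0,-2), (0,0,0,2),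
      (-1,-1,-1,-1), (-1,-1,-1,1), (-1,-1,1,-1), (-1,-1,1,1), (-1,1,-1,-1), (-1,1,-1,1),
      (-1,1,1,-1), (-1,1,1,1), (1,-1,-1,-1), (1,-1,-1,1), (1,-1,1,-1), (1,-1,1,1), (1,1,-1,-1),
      (1,1,-1,1), (1,1,1,-1), (1,1,1,1)]"

fun eunit :: "elt \<Rightarrow> bool" where
  "eunit (k, q) \<longleftrightarrow> q \<in> set hurwitz_units"

lemma hurwitz_units_mult_closed:
  "\<forall>q1\<in>set hurwitz_units. \<forall>q2\<in>set hurwitz_units.
     qeven (qprod q1 q2) \<and> qhalf (qprod q1 q2) \<in> set hurwitz_units"
  by code_simp

lemma hurwitz_units_conj:
  "\<forall>(a, b, c, d)\<in>set hurwitz_units. a*a + b*b + c*c + d*d = 4 \<and> (a, - b, - c, - d) \<in> set hurwitz_units"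
  by code_simp

lemma qmat_mult:
  "qmat z1 a1 b1 c1 d1 ** qmat z2 a2 b2 c2 d2 =
   qmat (z1 * z2) ((a1*a2 - b1*b2 - c1*c2 - d1*d2) / 2) ((a1*b2 + b1*a2 + c1*d2 - d1*c2) / 2)
     ((a1*c2 - b1*d2 + c1*a2 + d1*b2) / 2) ((a1*d2 + b1*c2 - c1*b2 + d1*a2) / 2)"
proof -
  have i: "\<i> * \<i> = -1" by simp
  show ?thesis
    unfolding qmat_def matrix_matrix_mult_def
    by (simp add: vec_eq_iff forall_2 sum_2 del: i_squared)
      (intro conjI; simp add: field_simps del: i_squared; use i in algebra)
qed

lemma emat_emul:
  assumes "qeven (qprod q1 q2)"
  shows "emat (emul (k1, q1) (k2, q2)) = emat (k1, q1) ** emat (k2, q2)"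
proof -
  obtain a1 b1 c1 d1 where q1: "q1 = (a1, b1, c1, d1)" by (cases q1) auto
  obtain a2 b2 c2 d2 where q2: "q2 = (a2, b2, c2, d2)" by (cases q2) auto
  have half: "(of_int (x div 2) :: complex) = of_int x / 2" if "even x" for x :: int
    using that by (auto elim!: evenE)
  have cis: "cis ((of_int k1 + of_int k2) * pi / 6) = cis (of_int k1 * pi / 6) * cis (of_int k2 * pi / 6)"
    by (simp add: cis_mult algebra_simps add_divide_distrib)
  from assms show ?thesis
    unfolding q1 q2 emul.simps qprod.simps qhalf.simps emat.simps qmat_mult qeven.simps
    by (simp only: half cis of_int_add of_int_mult of_int_diff)
qed

lemma emul_unit:
  assumes "eunit g" "eunit h"
  shows "eunit (emul g h)" "emat (emul g h) = emat g ** emat h"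
proof -
  obtain k1 q1 k2 q2 where gh: "g = (k1, q1)" "h = (k2, q2)" by (cases g, cases h) auto
  have "qeven (qprod q1 q2)" "qhalf (qprod q1 q2) \<in> set hurwitz_units"
    using hurwitz_units_mult_closed assms gh by auto
  then show "eunit (emul g h)" "emat (emul g h) = emat g ** emat h"
    using emat_emul gh by simp_all
qed

lemma emat_eone: "emat eone = mat 1"
  by (simp add: eone_def qmat_def vec_eq_iff forall_2 mat_def)

lemma eunit_eone: "eunit eone"
  by (simp add: eone_def hurwitz_units_def)

lemma einv_unit:
  assumes "eunit g"
  shows "eunit (einv g)" "matrix_inv (emat g) = emat (einv g)" "invertible (emat g)"
proof -
  obtain k a b c d where g: "g = (k, a, b, c, d)" by (cases g) auto
  have norm: "a*a + b*b + c*c + d*d = 4" and conj: "(a, - b, - c, - d) \<in> set hurwitz_units"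
    using hurwitz_units_conj assms g by auto
  then show "eunit (einv g)" using g by simp
  have "emul g (einv g) = eone" "emul (einv g) g = eone"
    using norm by (simp_all add: g eone_def algebra_simps)
  then have "emat g ** emat (einv g) = mat 1" "emat (einv g) ** emat g = mat 1"
    using emul_unit assms \<open>eunit (einv g)\<close> emat_eone by metis+
  then show "matrix_inv (emat g) = emat (einv g)" "invertible (emat g)"
    unfolding invertible_def by (auto intro: matrix_inv_unique)
qed

lemma cis_mod_12: "cis (of_int k * pi / 6) = cis (of_int (k mod 12) * pi / 6)"
proof -
  have "of_int k * pi / 6 = of_int (k mod 12) * pi / 6 + 2 * pi * of_int (k div 12)"
  proof -
    have "real_of_int k = of_int (k mod 12) + 12 * of_int (k div 12)"
      by (metis div_mult_mod_eq add.commute mult.commute of_int_add of_int_mult of_int_numeral)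
    then show ?thesis by (simp add: field_simps)
  qed
  then have "cis (of_int k * pi / 6) = cis (of_int (k mod 12) * pi / 6) * cis (2 * pi * of_int (k div 12))"
    by (simp only: cis_mult)
  then show ?thesis by simp
qed

lemma emat_enorm: "emat (enorm g) = emat g"
proof -
  obtain k a b c d where g: "g = (k, a, b, c, d)" by (cases g) auto
  have "cis (of_int (k mod 12 - 6) * pi / 6) = - cis (of_int (k mod 12) * pi / 6)"
  proof -
    have "of_int (k mod 12 - 6) * pi / 6 = of_int (k mod 12) * pi / 6 + (- pi)"
      by (simp add: field_simps)
    then have "cis (of_int (k mod 12 - 6) * pi / 6) = cis (of_int (k mod 12) * pi / 6) * cis (- pi)"
      by (simp only: cis_mult)
    then show ?thesis by (simp add: complex_eq_iff)
  qed
  moreover have "qmat (- z) (- a) (- b) (- c) (- d) = qmat z a b c d" for z a b c d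
    unfolding qmat_def by (simp add: algebra_simps)
  ultimately show ?thesis by (simp add: g cis_mod_12[of k])
qed

lemma gen_group_emat:
  assumes "\<forall>a\<in>A. \<exists>g. eunit g \<and> a = emat g" "M \<in> gen_group A"
  shows "\<exists>g. eunit g \<and> M = emat g"
  using assms(2)
proof induction
  case gen_one
  show ?case using eunit_eone emat_eone by metis
next
  case (gen_mult x y)
  then show ?case using emul_unit by metis
next
  case (gen_inv x)
  then show ?case using einv_unit by metis
qed (use assms(1) in blast)

definition s_elt :: elt where "s_elt = (3, 0, -2, 0, 0)"
definition t_elt :: elt where "t_elt = (2, 1, -1, 1, -1)"
definition u_elt :: elt where "u_elt = (2, 1, -1, -1, -1)"

lemma cis_pi_third: "cis (2 * pi / 6) = Complex (1 / 2) (sqrt 3 / 2)"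
proof -
  have "2 * pi / 6 = pi / 3" by simp
  then show ?thesis by (simp add: complex_eq_iff cos_60 sin_60)
qed

lemma mat_s_emat: "mat_s = emat s_elt"
proof -
  have "cis (3 * pi / 6) = \<i>" by (simp add: complex_eq_iff)
  then show ?thesis unfolding mat_s_def s_elt_def by (simp add: qmat_def vec_eq_iff forall_2)
qed

lemma mat_t_emat: "mat_t = emat t_elt"
  unfolding mat_t_def t_elt_def
  by (simp add: qmat_def vec_eq_iff forall_2 cis_pi_third complex_eq_iff field_simps cos_60 sin_60)

lemma mat_u_emat: "mat_u = emat u_elt"
  unfolding mat_u_def mat_t_def u_elt_def transpose_def
  by (simp add: qmat_def vec_eq_iff forall_2 cis_pi_third complex_eq_iff field_simps cos_60 sin_60)

lemma eunit_generators: "eunit s_elt" "eunit t_elt" "eunit u_elt"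
  by (simp_all add: s_elt_def t_elt_def u_elt_def hurwitz_units_def)

lemma G7_emat:
  assumes "M \<in> G7"
  shows "\<exists>g. eunit g \<and> M = emat g"
proof (rule gen_group_emat)
  show "\<forall>a\<in>{mat_s, mat_t, mat_u}. \<exists>g. eunit g \<and> a = emat g"
    using eunit_generators mat_s_emat mat_t_emat mat_u_emat by blast
qed (use assms G7_def in simp)

lemma invertible_G7: "M \<in> G7 \<Longrightarrow> invertible M"
  using G7_emat einv_unit by blast

lemma G6_subset_G7: "G6 \<subseteq> G7"
  unfolding G6_def G7_def by (rule gen_group_least) (auto intro: gen_base)

lemma invertible_G6_generators: "\<forall>a\<in>{mat_s, mat_t}. invertible a"
  using invertible_G7 G6_subset_G7 unfolding G6_def by (auto intro: gen_base)

definition ehurwitz :: "nat \<Rightarrow> elt list \<Rightarrow> elt list" where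
  "ehurwitz i U = U[i := U ! (i + 1), i + 1 := emul (emul (einv (U ! (i + 1))) (U ! i)) (U ! (i + 1))]"

fun ehurwitz_word :: "nat list \<Rightarrow> elt list \<Rightarrow> elt list" where
  "ehurwitz_word [] U = U"
| "ehurwitz_word (i # w) U = ehurwitz_word w (ehurwitz i U)"

lemma ehurwitz_unit:
  assumes "\<forall>g\<in>set U. eunit g" "i + 1 < length U"
  shows "\<forall>g\<in>set (ehurwitz i U). eunit g" "map emat (ehurwitz i U) = hurwitz i (map emat U)"
proof -
  have units: "eunit (U ! i)" "eunit (U ! (i + 1))" "eunit (einv (U ! (i + 1)))"
    using assms einv_unit by auto
  then have conj: "eunit (emul (emul (einv (U ! (i + 1))) (U ! i)) (U ! (i + 1)))"
    and "emat (emul (emul (einv (U ! (i + 1))) (U ! i)) (U ! (i + 1)))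
        = matrix_inv (emat (U ! (i + 1))) ** emat (U ! i) ** emat (U ! (i + 1))"
    using emul_unit einv_unit by metis+
  then show "map emat (ehurwitz i U) = hurwitz i (map emat U)"
    using assms(2) by (simp add: ehurwitz_def hurwitz_def map_update)
  have "set (ehurwitz i U)
      \<subseteq> insert (emul (emul (einv (U ! (i + 1))) (U ! i)) (U ! (i + 1))) (insert (U ! (i + 1)) (set U))"
    unfolding ehurwitz_def
    using set_update_subset_insert[of "U[i := U ! (i + 1)]" "i + 1"] set_update_subset_insert[of U i]
    by blast
  then show "\<forall>g\<in>set (ehurwitz i U). eunit g" using assms(1) units conj by blast
qed

lemma hurwitz_step_ehurwitz_word:
  assumes "\<forall>g\<in>set U. eunit g" "\<forall>i\<in>set w. i + 1 < length U"
  shows "hurwitz_step\<^sup>*\<^sup>* (map emat U) (map emat (ehurwitz_word w U))"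
  using assms
proof (induction w arbitrary: U)
  case (Cons i w)
  then have "hurwitz_step (map emat U) (map emat (ehurwitz i U))"
    unfolding hurwitz_step_def using ehurwitz_unit by (intro exI[of _ i]) simp
  moreover have "hurwitz_step\<^sup>*\<^sup>* (map emat (ehurwitz i U)) (map emat (ehurwitz_word w (ehurwitz i U)))"
  proof (rule Cons.IH)
    show "\<forall>g\<in>set (ehurwitz i U). eunit g" using Cons.prems by (intro ehurwitz_unit(1)) auto
    show "\<forall>j\<in>set w. j + 1 < length (ehurwitz i U)" using Cons.prems by (simp add: ehurwitz_def)
  qed
  ultimately show ?case by (simp add: converse_rtranclp_into_rtranclp)
qed simp

section \<open>The reflection classes\<close>

definition S_model :: "elt list" where
  "S_model = [(3,0,-2,0,0), (3,0,0,-2,0), (3,0,0,0,-2), (3,0,0,0,2), (3,0,0,2,0), (3,0,2,0,0)]"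

definition R1_model :: "elt list" where
  "R1_model = [(2,1,-1,-1,1), (2,1,-1,1,-1), (2,1,1,-1,-1), (2,1,1,1,1)]"

definition R1inv_model :: "elt list" where
  "R1inv_model = [(4,-1,-1,-1,1), (4,-1,-1,1,-1), (4,-1,1,-1,-1), (4,-1,1,1,1)]"

definition Rprime_model :: "elt list" where
  "Rprime_model = R1_model @ R1inv_model"

text \<open>Conjugation by (k, q) does not depend on k, as zeta^k is central.\<close>

definition econj :: "quat \<Rightarrow> elt \<Rightarrow> elt" where
  "econj q g = emul (emul (0, q) g) (einv (0, q))"

lemma eunit_models:
  "\<forall>g\<in>set S_model. eunit g" "\<forall>g\<in>set R1_model. eunit g" "\<forall>g\<in>set R1inv_model. eunit g"
  by code_simp+

lemma econj_generators_model:
  "\<forall>q\<in>set hurwitz_units. enorm (econj q s_elt) \<in> set S_model \<and> enorm (econj q t_elt) \<in> set R1_model"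
  by code_simp

lemma einv_R1_model: "\<forall>r\<in>set R1_model. enorm (einv r) \<in> set R1inv_model"
  by code_simp

lemma trace_models: "(\<forall>g\<in>set S_model. fst (snd g) = 0) \<and> (\<forall>g\<in>set Rprime_model. fst (snd g) \<noteq> 0)"
  by code_simp

lemma conj_class7_emat:
  assumes "eunit r" "M \<in> conj_class7 (emat r)"
  shows "\<exists>q\<in>set hurwitz_units. M = emat (econj q r)"
proof -
  obtain h where "h \<in> G7" and M: "M = h ** emat r ** matrix_inv h"
    using assms(2) unfolding conj_class7_def by blast
  then obtain g where "eunit g" "h = emat g" using G7_emat by blast
  moreover obtain k q where "g = (k, q)" by (cases g)
  ultimately have kq: "eunit (k, q)" "h = emat (k, q)" by simp_all
  have "emul (emul (k, q) r) (einv (k, q)) = econj q r"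
    unfolding econj_def by (cases q; cases r) simp
  then have "M = emat (econj q r)"
    using M kq assms(1) emul_unit einv_unit by metis
  then show ?thesis using kq(1) by auto
qed

lemma S_cls_emat: "M \<in> S_cls \<Longrightarrow> \<exists>g\<in>set S_model. M = emat g"
  unfolding S_cls_def mat_s_emat
  using conj_class7_emat[OF eunit_generators(1)] econj_generators_model emat_enorm by metis

lemma R1_emat: "M \<in> R1 \<Longrightarrow> \<exists>g\<in>set R1_model. M = emat g"
  unfolding R1_def mat_t_emat
  using conj_class7_emat[OF eunit_generators(2)] econj_generators_model emat_enorm by metis

lemma R1inv_emat: "M \<in> R1inv \<Longrightarrow> \<exists>g\<in>set R1inv_model. M = emat g"
proof -
  assume "M \<in> R1inv"
  then obtain r where r: "r \<in> set R1_model" "M = matrix_inv (emat r)"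
    unfolding R1inv_def using R1_emat by blast
  then have "M = emat (enorm (einv r))"
    using eunit_models(2) einv_unit emat_enorm by simp
  then show ?thesis using einv_R1_model r(1) by blast
qed

lemma Rprime_emat: "M \<in> Rprime \<Longrightarrow> \<exists>g\<in>set Rprime_model. M = emat g"
  unfolding Rprime_def Rprime_model_def using R1_emat R1inv_emat by fastforce

lemma trace_emat: "emat (k, a, b, c, d) $ 1 $ 1 + emat (k, a, b, c, d) $ 2 $ 2 = cis (of_int k * pi / 6) * of_int a"
  by (simp add: qmat_def field_simps)

lemma S_cls_Rprime_disjoint: "S_cls \<inter> Rprime = {}"
proof (intro equals0I)
  fix M assume "M \<in> S_cls \<inter> Rprime"
  then obtain g1 g2 where 1: "g1 \<in> set S_model" "M = emat g1" and 2: "g2 \<in> set Rprime_model" "M = emat g2"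
    using S_cls_emat Rprime_emat by blast
  obtain k1 a1 q1 k2 a2 q2 where g: "g1 = (k1, a1, q1)" "g2 = (k2, a2, q2)" by (cases g1, cases g2) auto
  have "a1 = 0" "a2 \<noteq> 0" using trace_models 1(1) 2(1) g by force+
  have "M $ 1 $ 1 + M $ 2 $ 2 = cis (of_int k1 * pi / 6) * of_int a1"
    using 1(2) g(1) trace_emat by (cases q1) simp
  moreover have "M $ 1 $ 1 + M $ 2 $ 2 = cis (of_int k2 * pi / 6) * of_int a2"
    using 2(2) g(2) trace_emat by (cases q2) simp
  ultimately show False using \<open>a1 = 0\<close> \<open>a2 \<noteq> 0\<close> by (simp add: cis_neq_zero)
qed

lemma conj_closed_conj_class7: "conj_closed G7 (conj_class7 r)"
  unfolding conj_closed_def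
proof (intro ballI)
  fix x g assume "x \<in> conj_class7 r" "g \<in> G7"
  then obtain h where h: "h \<in> G7" "x = h ** r ** matrix_inv h" unfolding conj_class7_def by blast
  have "matrix_inv g ** h \<in> G7" using \<open>g \<in> G7\<close> h(1) unfolding G7_def by (auto intro: gen_group.intros)
  moreover have "matrix_inv (matrix_inv g ** h) = matrix_inv h ** g"
    using invertible_G7 \<open>g \<in> G7\<close> h(1)
    by (simp add: matrix_inv_mult invertible_matrix_inv matrix_inv_matrix_inv)
  then have "matrix_inv g ** x ** g = (matrix_inv g ** h) ** r ** matrix_inv (matrix_inv g ** h)"
    using h(2) by (simp add: matrix_mul_assoc)
  ultimately show "matrix_inv g ** x ** g \<in> conj_class7 r" unfolding conj_class7_def by blast
qed

lemma mat_s_in_G7: "mat_s \<in> G7"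
  unfolding G7_def by (simp add: gen_base)

lemma invertible_G7_generators: "\<forall>a\<in>{mat_s, mat_t, mat_u}. invertible a"
  using invertible_G7 unfolding G7_def by (auto intro: gen_base)

lemma classes_subset_G7: "C \<in> {R1, R1inv, S_cls, Rprime} \<Longrightarrow> C \<subseteq> G7"
proof -
  have "conj_class7 r \<subseteq> G7" if "r \<in> G7" for r
    using that unfolding conj_class7_def G7_def by (auto intro: gen_group.intros)
  moreover have "mat_t \<in> G7" unfolding G7_def by (simp add: gen_base)
  ultimately have "R1 \<subseteq> G7" "S_cls \<subseteq> G7" using mat_s_in_G7 unfolding R1_def S_cls_def by auto
  moreover have "R1inv \<subseteq> G7"
    using \<open>R1 \<subseteq> G7\<close> unfolding R1inv_def G7_def by (auto intro: gen_inv)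
  ultimately show "C \<in> {R1, R1inv, S_cls, Rprime} \<Longrightarrow> C \<subseteq> G7" unfolding Rprime_def by blast
qed

lemma conj_closed_R1inv: "conj_closed G7 R1inv"
  unfolding conj_closed_def
proof (intro ballI)
  fix x g assume "x \<in> R1inv" "g \<in> G7"
  then obtain y where y: "y \<in> R1" "x = matrix_inv y" unfolding R1inv_def by blast
  have "invertible y" using classes_subset_G7 invertible_G7 y(1) by blast
  then have "matrix_inv g ** x ** g = matrix_inv (matrix_inv g ** y ** g)"
    using invertible_G7 \<open>g \<in> G7\<close> y(2) by (simp add: matrix_inv_conj)
  moreover have "matrix_inv g ** y ** g \<in> R1"
    using conj_closed_conj_class7 y(1) \<open>g \<in> G7\<close> unfolding R1_def conj_closed_def by blast
  ultimately show "matrix_inv g ** x ** g \<in> R1inv" unfolding R1inv_def by blast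
qed

lemma conj_closed_classes: "C \<in> {R1, R1inv, S_cls, Rprime} \<Longrightarrow> conj_closed G7 C"
  using conj_closed_conj_class7 conj_closed_R1inv
  unfolding R1_def S_cls_def Rprime_def conj_closed_def by blast

lemma conj_closed_G6: "C \<in> {R1, R1inv, S_cls, Rprime} \<Longrightarrow> conj_closed G6 C"
  using conj_closed_classes G6_subset_G7 by (rule conj_closed_subset)

section \<open>Generators of G6\<close>

lemma list_all2_ex: "list_all2 P xs ys \<Longrightarrow> x \<in> set xs \<Longrightarrow> \<exists>y. P x y"
  by (metis in_set_conv_nth list_all2_conv_all_nth)

fun eword :: "elt \<Rightarrow> elt \<Rightarrow> nat list \<Rightarrow> elt" where
  "eword a c [] = eone"
| "eword a c (l # w) = emul (if l = 0 then a else c) (eword a c w)"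

lemma eword_gen_group:
  assumes "eunit a" "eunit c"
  shows "eunit (eword a c w) \<and> emat (eword a c w) \<in> gen_group {emat a, emat c}"
proof (induction w)
  case Nil
  show ?case using eunit_eone emat_eone by (simp add: gen_one)
next
  case (Cons l w)
  let ?x = "if l = 0 then a else c"
  have "eunit ?x" "emat ?x \<in> gen_group {emat a, emat c}" using assms by (auto intro: gen_base)
  then show ?case using Cons emul_unit by (simp add: gen_mult)
qed

text \<open>
  The entry of generating_words at (a, c) is a pair of words in a (letter 0) and c (letter 1)
  whose products are s and t.
\<close>

definition generating_words :: "(nat list \<times> nat list) list list" where
  "generating_words =
    [[([0], [0,1,0]), ([0], [1]), ([0], [1,1,0,1,0,1]), ([0], [1,0,1,0,1,1]), ([0], [0,1,1,0]), ([0], [1,1]), ([0], [1,0,1,1,0,1,1]), ([0], [1,1,0,1,1,0,1])],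
     [([1,1,0,1], [1,1,0,1,0,1]), ([0,1,1,0,1,0], [1]), ([0,1,1,0,1,0], [1,0,1,0,1,1]), ([1,1,0,1], [0,1,0]), ([1,0,1,1], [1,0,1,1,0,1,1]), ([0,1,0,1,1,0], [1,1]), ([0,1,0,1,1,0], [1,1,0,1,1,0,1]), ([1,0,1,1], [0,1,1,0])],
     [([0,1,0,1,1,0], [1,0,1,0,1,1]), ([1,0,1,1], [1]), ([0,1,0,1,1,0], [0,1,0]), ([1,0,1,1], [1,1,0,1,0,1]), ([0,1,1,0,1,0], [1,1,0,1,1,0,1]), ([1,1,0,1], [1,1]), ([0,1,1,0,1,0], [0,1,1,0]), ([1,1,0,1], [1,0,1,1,0,1,1])],
     [([1,0,1,1], [1,0,1,0,1,1]), ([0,1,0,1,1,0], [1]), ([1,0,1,1], [0,1,0]), ([0,1,0,1,1,0], [1,1,0,1,0,1]), ([1,1,0,1], [1,1,0,1,1,0,1]), ([0,1,1,0,1,0], [1,1]), ([1,1,0,1], [0,1,1,0]), ([0,1,1,0,1,0], [1,0,1,1,0,1,1])],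
     [([0,1,1,0,1,0], [1,1,0,1,0,1]), ([1,1,0,1], [1]), ([1,1,0,1], [1,0,1,0,1,1]), ([0,1,1,0,1,0], [0,1,0]), ([0,1,0,1,1,0], [1,0,1,1,0,1,1]), ([1,0,1,1], [1,1]), ([1,0,1,1], [1,1,0,1,1,0,1]), ([0,1,0,1,1,0], [0,1,1,0])],
     [([1,1,0,1,0,1,1,0,1], [0,1,0]), ([1,1,0,1,0,1,1,0,1], [1]), ([1,1,0,1,0,1,1,0,1], [1,1,0,1,0,1]), ([1,1,0,1,0,1,1,0,1], [1,0,1,0,1,1]), ([1,1,0,1,0,1,1,0,1], [0,1,1,0]), ([1,1,0,1,0,1,1,0,1], [1,1]), ([1,1,0,1,0,1,1,0,1], [1,0,1,1,0,1,1]), ([1,1,0,1,0,1,1,0,1], [1,1,0,1,1,0,1])]]"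

lemma generating_words_correct:
  "list_all2 (\<lambda>a row. list_all2 (\<lambda>c (ws, wt). enorm (eword a c ws) = s_elt \<and> enorm (eword a c wt) = t_elt)
     Rprime_model row) S_model generating_words"
  by code_simp

lemma G6_subset_gen_group:
  assumes "a \<in> S_cls" "c \<in> Rprime"
  shows "G6 \<subseteq> gen_group {a, c}"
proof -
  obtain a' where a': "a' \<in> set S_model" "a = emat a'" using S_cls_emat assms(1) by blast
  obtain c' where c': "c' \<in> set Rprime_model" "c = emat c'" using Rprime_emat assms(2) by blast
  obtain row where "list_all2 (\<lambda>c (ws, wt). enorm (eword a' c ws) = s_elt \<and> enorm (eword a' c wt) = t_elt)
      Rprime_model row"
    using list_all2_ex[OF generating_words_correct a'(1)] by blast
  from list_all2_ex[OF this c'(1)] obtain ws wt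
    where "enorm (eword a' c' ws) = s_elt" "enorm (eword a' c' wt) = t_elt"
    by auto
  then have st: "mat_s = emat (eword a' c' ws)" "mat_t = emat (eword a' c' wt)"
    using mat_s_emat mat_t_emat emat_enorm by metis+
  have "eunit a'" "eunit c'" using eunit_models a'(1) c'(1) by (auto simp: Rprime_model_def)
  then have "emat (eword a' c' w) \<in> gen_group {emat a', emat c'}" for w
    using eword_gen_group by blast
  then have "{mat_s, mat_t} \<subseteq> gen_group {emat a', emat c'}" unfolding st by blast
  then show ?thesis unfolding G6_def a'(2) c'(2) by (rule gen_group_least)
qed

lemma gen_group_eq_G6:
  assumes "a \<in> S_cls" "c \<in> Rprime" "a \<in> X" "c \<in> X" "X \<subseteq> G6"
  shows "gen_group X = G6"
proof
  show "gen_group X \<subseteq> G6" unfolding G6_def by (rule gen_group_least) (use assms(5) G6_def in simp)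
  have "gen_group {a, c} \<subseteq> gen_group X"
    by (rule gen_group_least) (use assms(3,4) in \<open>auto intro: gen_base\<close>)
  then show "G6 \<subseteq> gen_group X" using G6_subset_gen_group[OF assms(1,2)] by blast
qed

section \<open>Hurwitz moves on three strands\<close>

text \<open>
  The entry of tail_words_C at (c, y, x) is a word of Hurwitz moves (letter i acting on the
  strands i and i + 1) taking (s, c, y) to a triple ending in x; the words were found by
  breadth-first search.
\<close>

definition tail_certificate :: "elt list \<Rightarrow> nat list list list list \<Rightarrow> bool" where
  "tail_certificate Cl W \<longleftrightarrow>
     list_all2 (\<lambda>c Wc. list_all2 (\<lambda>y Wy. list_all2 (\<lambda>x w. list_all (\<lambda>i. i < 2) w \<and>
       enorm (last (ehurwitz_word w [s_elt, c, y])) = x) Cl Wy) Cl Wc) Rprime_model W"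

definition tail_words_S :: "nat list list list list" where
  "tail_words_S =
    [[[[],[0,0,0,1],[0,1],[0,0,1,1],[0,0,0,1,1,1],[0,1,1]],[[1,0,0,1],[],[0,1],[0,1,1,1],[0,1,1],[1,1]],[[0,0,1,1,1,1],[1,1],[],[0,1],[0,0,1,1],[1,1,1,1]],[[1,1,1,1],[0,0,0,1],[0,0,0,1,1],[],[1,1],[0,0,0,0,0,1]],[[1,1],[0,1,1],[0,1],[0,1,1,1],[],[1,0,0,1]],[[0,1,1],[0,0,0,1],[0,1],[1,1],[1,1,1,1],[]]],
     [[[],[0,0,0,1,1,1],[0,0,1,1],[0,1],[0,0,0,1],[0,1,1]],[[1,1],[],[0,1,1,1],[0,1],[0,1,1],[1,0,0,1]],[[1,1,1,1],[1,1],[],[0,0,0,1,1],[0,0,0,1],[0,0,0,0,0,1]],[[0,0,1,1,1,1],[0,0,1,1],[0,1],[],[1,1],[1,1,1,1]],[[1,0,0,1],[0,1,1],[0,1,1,1],[0,1],[],[1,1]],[[0,1,1],[1,1,1,1],[1,1],[0,1],[0,0,0,1],[]]],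
     [[[],[0,0,0,1,1,1],[0,1],[0,0,1,1],[0,0,0,1],[0,1,1]],[[1,1],[],[0,1],[0,1,1,1],[0,1,1],[1,0,0,1]],[[0,0,1,1,1,1],[0,0,1,1],[],[0,1],[1,1],[1,1,1,1]],[[1,1,1,1],[1,1],[0,0,0,1,1],[],[0,0,0,1],[0,0,0,0,0,1]],[[1,0,0,1],[0,1,1],[0,1],[0,1,1,1],[],[1,1]],[[0,1,1],[1,1,1,1],[0,1],[1,1],[0,0,0,1],[]]],
     [[[],[0,0,0,1],[0,0,1,1],[0,1],[0,0,0,1,1,1],[0,1,1]],[[1,0,0,1],[],[0,1,1,1],[0,1],[0,1,1],[1,1]],[[1,1,1,1],[0,0,0,1],[],[0,0,0,1,1],[1,1],[0,0,0,0,0,1]],[[0,0,1,1,1,1],[1,1],[0,1],[],[0,0,1,1],[1,1,1,1]],[[1,1],[0,1,1],[0,1,1,1],[0,1],[],[1,0,0,1]],[[0,1,1],[0,0,0,1],[1,1],[0,1],[1,1,1,1],[]]],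
     [[[],[0,0,1,1],[0,0,0,1,1,1],[0,0,0,1],[0,1],[0,1,1]],[[1,1,1,1],[],[1,1],[0,0,0,1],[0,0,0,1,1],[0,0,0,0,0,1]],[[1,1],[0,1,1,1],[],[0,1,1],[0,1],[1,0,0,1]],[[1,0,0,1],[0,1,1,1],[0,1,1],[],[0,1],[1,1]],[[0,0,1,1,1,1],[0,1],[0,0,1,1],[1,1],[],[1,1,1,1]],[[0,1,1],[1,1],[1,1,1,1],[0,0,0,1],[0,1],[]]],
     [[[],[0,1],[0,0,0,1],[0,0,0,1,1,1],[0,0,1,1],[0,1,1]],[[0,0,1,1,1,1],[],[1,1],[0,0,1,1],[0,1],[1,1,1,1]],[[1,0,0,1],[0,1],[],[0,1,1],[0,1,1,1],[1,1]],[[1,1],[0,1],[0,1,1],[],[0,1,1,1],[1,0,0,1]],[[1,1,1,1],[0,0,0,1,1],[0,0,0,1],[1,1],[],[0,0,0,0,0,1]],[[0,1,1],[0,1],[0,0,0,1],[1,1,1,1],[1,1],[]]],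
     [[[],[0,1],[0,0,0,1,1,1],[0,0,0,1],[0,0,1,1],[0,1,1]],[[0,0,1,1,1,1],[],[0,0,1,1],[1,1],[0,1],[1,1,1,1]],[[1,1],[0,1],[],[0,1,1],[0,1,1,1],[1,0,0,1]],[[1,0,0,1],[0,1],[0,1,1],[],[0,1,1,1],[1,1]],[[1,1,1,1],[0,0,0,1,1],[1,1],[0,0,0,1],[],[0,0,0,0,0,1]],[[0,1,1],[0,1],[1,1,1,1],[0,0,0,1],[1,1],[]]],
     [[[],[0,0,1,1],[0,0,0,1],[0,0,0,1,1,1],[0,1],[0,1,1]],[[1,1,1,1],[],[0,0,0,1],[1,1],[0,0,0,1,1],[0,0,0,0,0,1]],[[1,0,0,1],[0,1,1,1],[],[0,1,1],[0,1],[1,1]],[[1,1],[0,1,1,1],[0,1,1],[],[0,1],[1,0,0,1]],[[0,0,1,1,1,1],[0,1],[1,1],[0,0,1,1],[],[1,1,1,1]],[[0,1,1],[1,1],[0,0,0,1],[1,1,1,1],[0,1],[]]]]"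

definition tail_words_R1 :: "nat list list list list" where
  "tail_words_R1 =
    [[[[],[0,0,0,1,1],[0,0,1],[0,0,1,1]],[[1,1],[],[1],[0,1,1]],[[1,1],[0,0,1],[],[1]],[[1,1],[1],[1,0,0,1],[]]],
     [[[],[1,1],[0,1,1],[1]],[[0,0,0,1,1],[],[0,0,1,1],[0,0,1]],[[1],[1,1],[],[1,0,0,1]],[[0,0,1],[1,1],[1],[]]],
     [[[],[1],[1,1],[0,0,1]],[[1,0,0,1],[],[1,1],[1]],[[0,0,1],[0,0,1,1],[],[0,0,0,1,1]],[[1],[0,1,1],[1,1],[]]],
     [[[],[1,0,0,1],[1],[1,1]],[[1],[],[0,0,1],[1,1]],[[0,1,1],[1],[],[1,1]],[[0,0,1,1],[0,0,1],[0,0,0,1,1],[]]],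
     [[[],[0,1,1],[0,0,0,1,1],[0,0,1,1]],[[0,1,1],[],[1,0,0,1],[1,1]],[[1,0,0,1],[1,1],[],[0,1,1]],[[0,0,0,0,1,1],[0,0,1,1],[1,1],[]]],
     [[[],[0,1,1],[1,1],[1,0,0,1]],[[0,1,1],[],[0,0,1,1],[0,0,0,1,1]],[[0,0,1,1],[0,0,0,0,1,1],[],[1,1]],[[1,1],[1,0,0,1],[0,1,1],[]]],
     [[[],[0,1,1],[1,0,0,1],[1,1]],[[1,1],[],[0,0,0,0,1,1],[0,0,1,1]],[[0,0,0,1,1],[0,0,1,1],[],[0,1,1]],[[1,0,0,1],[1,1],[0,1,1],[]]],
     [[[],[1,1],[0,0,1,1],[0,0,0,0,1,1]],[[0,1,1],[],[1,1],[1,0,0,1]],[[1,1],[1,0,0,1],[],[0,1,1]],[[0,0,1,1],[0,0,0,1,1],[0,1,1],[]]]]"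

definition tail_words_R1inv :: "nat list list list list" where
  "tail_words_R1inv =
    [[[[],[0,1,1],[0,0,1,1],[0,0,0,1,1]],[[0,1,1],[],[1,1],[1,0,0,1]],[[0,0,0,0,1,1],[0,0,1,1],[],[1,1]],[[1,0,0,1],[1,1],[0,1,1],[]]],
     [[[],[0,1,1],[1,0,0,1],[1,1]],[[0,1,1],[],[0,0,0,1,1],[0,0,1,1]],[[1,1],[1,0,0,1],[],[0,1,1]],[[0,0,1,1],[0,0,0,0,1,1],[1,1],[]]],
     [[[],[1,1],[0,0,0,0,1,1],[0,0,1,1]],[[0,1,1],[],[1,0,0,1],[1,1]],[[0,0,1,1],[0,0,0,1,1],[],[0,1,1]],[[1,1],[1,0,0,1],[0,1,1],[]]],
     [[[],[0,1,1],[1,1],[1,0,0,1]],[[1,1],[],[0,0,1,1],[0,0,0,0,1,1]],[[1,0,0,1],[1,1],[],[0,1,1]],[[0,0,0,1,1],[0,0,1,1],[0,1,1],[]]],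
     [[[],[0,0,0,1,1],[0,0,1,1],[0,0,1]],[[1,1],[],[0,1,1],[1]],[[1,1],[1],[],[1,0,0,1]],[[1,1],[0,0,1],[1],[]]],
     [[[],[1,1],[1],[0,1,1]],[[0,0,0,1,1],[],[0,0,1],[0,0,1,1]],[[0,0,1],[1,1],[],[1]],[[1],[1,1],[1,0,0,1],[]]],
     [[[],[1,0,0,1],[1,1],[1]],[[1],[],[1,1],[0,0,1]],[[0,0,1,1],[0,0,1],[],[0,0,0,1,1]],[[0,1,1],[1],[1,1],[]]],
     [[[],[1],[0,0,1],[1,1]],[[1,0,0,1],[],[1],[1,1]],[[1],[0,1,1],[],[1,1]],[[0,0,1],[0,0,1,1],[0,0,0,1,1],[]]]]"
lemma tail_certificate_tables:
  "tail_certificate S_model tail_words_S"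
  "tail_certificate R1_model tail_words_R1"
  "tail_certificate R1inv_model tail_words_R1inv"
  by code_simp+

lemma tail_certificate_sound:
  assumes "tail_certificate Cl W" "\<forall>g\<in>set Cl. eunit g"
    and "c \<in> set Rprime_model" "y \<in> set Cl" "x \<in> set Cl"
  shows "\<exists>V. hurwitz_step\<^sup>*\<^sup>* [mat_s, emat c, emat y] V \<and> last V = emat x"
proof -
  obtain Wc where "list_all2 (\<lambda>y Wy. list_all2 (\<lambda>x w. list_all (\<lambda>i. i < 2) w \<and>
      enorm (last (ehurwitz_word w [s_elt, c, y])) = x) Cl Wy) Cl Wc"
    using list_all2_ex[OF assms(1)[unfolded tail_certificate_def] assms(3)] by blast
  from list_all2_ex[OF this assms(4)] obtain Wy where "list_all2 (\<lambda>x w. list_all (\<lambda>i. i < 2) w \<and>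
      enorm (last (ehurwitz_word w [s_elt, c, y])) = x) Cl Wy"
    by blast
  from list_all2_ex[OF this assms(5)] obtain w
    where w: "list_all (\<lambda>i. i < 2) w" "enorm (last (ehurwitz_word w [s_elt, c, y])) = x"
    by blast
  let ?U = "[s_elt, c, y]"
  have "\<forall>g\<in>set ?U. eunit g"
    using eunit_generators eunit_models assms(2-4) by (auto simp: Rprime_model_def)
  moreover have "\<forall>i\<in>set w. i + 1 < length ?U" using w(1) by (auto simp: list_all_iff)
  ultimately have "hurwitz_step\<^sup>*\<^sup>* (map emat ?U) (map emat (ehurwitz_word w ?U))"
    by (rule hurwitz_step_ehurwitz_word)
  then have steps: "hurwitz_step\<^sup>*\<^sup>* [mat_s, emat c, emat y] (map emat (ehurwitz_word w ?U))"
    by (simp add: mat_s_emat)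
  have "length (map emat (ehurwitz_word w ?U)) = 3" using hurwitz_step_length[OF steps] by simp
  then have "ehurwitz_word w ?U \<noteq> []" by auto
  then have "last (map emat (ehurwitz_word w ?U)) = emat x" using w(2) emat_enorm by (metis last_map)
  with steps show ?thesis by blast
qed

lemma hurwitz_tail_from_s:
  assumes "C \<in> {R1, R1inv, S_cls}" "c \<in> Rprime" "y \<in> C" "x \<in> C"
  shows "\<exists>V. hurwitz_step\<^sup>*\<^sup>* [mat_s, c, y] V \<and> last V = x"
proof -
  obtain Cl W where cert: "tail_certificate Cl W" "\<forall>g\<in>set Cl. eunit g"
    and C: "\<And>M. M \<in> C \<Longrightarrow> \<exists>g\<in>set Cl. M = emat g"
  proof -
    consider "C = R1" | "C = R1inv" | "C = S_cls" using assms(1) by blast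
    then show ?thesis
    proof cases
      case 1
      then show ?thesis using that[OF tail_certificate_tables(2) eunit_models(2)] R1_emat by blast
    next
      case 2
      then show ?thesis using that[OF tail_certificate_tables(3) eunit_models(3)] R1inv_emat by blast
    next
      case 3
      then show ?thesis using that[OF tail_certificate_tables(1) eunit_models(1)] S_cls_emat by blast
    qed
  qed
  obtain c' where "c' \<in> set Rprime_model" "c = emat c'" using Rprime_emat assms(2) by blast
  moreover obtain y' where "y' \<in> set Cl" "y = emat y'" using C assms(3) by blast
  moreover obtain x' where "x' \<in> set Cl" "x = emat x'" using C assms(4) by blast
  ultimately show ?thesis using tail_certificate_sound[OF cert] by blast
qed

lemma hurwitz_tail:
  assumes "C \<in> {R1, R1inv, S_cls}" "b \<in> S_cls" "c \<in> Rprime" "y \<in> C" "x \<in> C"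
  shows "\<exists>V. hurwitz_step\<^sup>*\<^sup>* [b, c, y] V \<and> last V = x"
proof -
  obtain h where h: "h \<in> G7" "b = h ** mat_s ** matrix_inv h"
    using assms(2) unfolding S_cls_def conj_class7_def by blast
  have "invertible h" using invertible_G7 h(1) by blast
  define push where "push m = matrix_inv (matrix_inv h) ** m ** matrix_inv h" for m
  define pull where "pull m = matrix_inv h ** m ** h" for m
  have push_pull: "push (pull m) = m" for m
    using \<open>invertible h\<close> unfolding push_def pull_def by (rule conj_conj_inverse)
  have pulled: "pull c \<in> Rprime" "pull y \<in> C" "pull x \<in> C"
    using assms(1,3-5) conj_closed_classes h(1) unfolding pull_def conj_closed_def by blast+
  then obtain V where V: "hurwitz_step\<^sup>*\<^sup>* [mat_s, pull c, pull y] V" "last V = pull x"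
    using hurwitz_tail_from_s[OF assms(1)] by blast
  have "set [mat_s, pull c, pull y] \<subseteq> gen_group {mat_s, mat_t, mat_u}"
    using pulled classes_subset_G7 assms(1) mat_s_in_G7 unfolding G7_def by auto
  then have "hurwitz_step\<^sup>*\<^sup>* (map push [mat_s, pull c, pull y]) (map push V)"
    unfolding push_def
    using hurwitz_step_map_conj[OF V(1)] invertible_G7_generators invertible_matrix_inv \<open>invertible h\<close>
    by blast
  moreover have "map push [mat_s, pull c, pull y] = [b, c, y]"
    using h(2) push_pull \<open>invertible h\<close> by (simp add: push_def matrix_inv_matrix_inv)
  moreover have "V \<noteq> []" using hurwitz_step_length[OF V(1)] by auto
  then have "last (map push V) = x" using V(2) push_pull by (simp add: last_map)
  ultimately show ?thesis by metis
qed

section \<open>Choosing the entries\<close>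

lemma pair_in_filter_mset:
  assumes "2 \<le> size (filter_mset P M)" "y \<in># M" "P y"
  shows "\<exists>c. P c \<and> {#y, c#} \<subseteq># filter_mset P M"
proof -
  have y: "y \<in># filter_mset P M" using assms(2,3) by simp
  then have "size (filter_mset P M - {#y#}) \<ge> 1" using assms(1) by (simp add: size_Diff_singleton)
  then have "filter_mset P M - {#y#} \<noteq> {#}" by auto
  then obtain c where c: "c \<in># filter_mset P M - {#y#}" by blast
  then have "{#y, c#} \<subseteq># filter_mset P M"
    using y by (metis insert_DiffM mset_subset_eq_add_mset_cancel single_subset_iff)
  moreover have "P c" using c by (auto dest: in_diffD)
  ultimately show ?thesis by blast
qed

lemma filter_mset_disjoint_subset:
  assumes "\<forall>x. \<not> (P x \<and> Q x)"
  shows "filter_mset P M + filter_mset Q M \<subseteq># M"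
proof -
  have "filter_mset P M + filter_mset Q M = filter_mset (\<lambda>x. P x \<or> Q x) M"
    by (rule multiset_eqI) (use assms in auto)
  then show ?thesis by (simp add: multiset_filter_subset)
qed

lemma three_entries:
  assumes "2 \<le> count_in S_cls T" "2 \<le> count_in Rprime T" "C \<in> {R1, R1inv, S_cls}"
    and "y \<in> set T" "y \<in> C"
  shows "\<exists>b c. {#b, c, y#} \<subseteq># mset T \<and> b \<in> S_cls \<and> c \<in> Rprime"
proof -
  define MS where "MS = filter_mset (\<lambda>r. r \<in> S_cls) (mset T)"
  define MR where "MR = filter_mset (\<lambda>r. r \<in> Rprime) (mset T)"
  have "size (filter_mset (\<lambda>r. r \<in> X) (mset T)) = count_in X T" for X
    unfolding count_in_conv_length_filter by (metis mset_filter size_mset)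
  then have sizes: "2 \<le> size MS" "2 \<le> size MR" using assms(1,2) unfolding MS_def MR_def by auto
  have sum: "MS + MR \<subseteq># mset T"
    unfolding MS_def MR_def using S_cls_Rprime_disjoint by (intro filter_mset_disjoint_subset) blast
  have y: "y \<in># mset T" using assms(4) by simp
  consider "C = S_cls" | "C \<subseteq> Rprime" using assms(3) unfolding Rprime_def by blast
  then show ?thesis
  proof cases
    case 1
    then obtain b where "b \<in> S_cls" "{#y, b#} \<subseteq># MS"
      using pair_in_filter_mset[OF sizes(1)[unfolded MS_def] y] assms(5) unfolding MS_def by auto
    moreover obtain c where "c \<in># MR" using sizes(2) by fastforce
    then have "{#c#} \<subseteq># MR" by simp
    ultimately have "{#y, b#} + {#c#} \<subseteq># MS + MR" by (intro subset_mset.add_mono)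
    then have "{#b, c, y#} \<subseteq># mset T"
      using subset_mset.order_trans[OF _ sum] by (simp add: add_mset_commute)
    moreover have "c \<in> Rprime" using \<open>c \<in># MR\<close> unfolding MR_def by simp
    ultimately show ?thesis using \<open>b \<in> S_cls\<close> by blast
  next
    case 2
    then obtain c where "c \<in> Rprime" "{#y, c#} \<subseteq># MR"
      using pair_in_filter_mset[OF sizes(2)[unfolded MR_def] y] assms(5) unfolding MR_def by auto
    moreover obtain b where "b \<in># MS" using sizes(1) by fastforce
    then have "{#b#} \<subseteq># MS" by simp
    ultimately have "{#b#} + {#y, c#} \<subseteq># MS + MR" by (intro subset_mset.add_mono)
    then have "{#b, c, y#} \<subseteq># mset T"
      using subset_mset.order_trans[OF _ sum] by (simp add: add_mset_commute)
    moreover have "b \<in> S_cls" using \<open>b \<in># MS\<close> unfolding MS_def by simp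
    ultimately show ?thesis using \<open>c \<in> Rprime\<close> by blast
  qed
qed

lemma count_in_butlast:
  assumes "2 \<le> count_in C T"
  shows "\<exists>r\<in>set (butlast T). r \<in> C"
proof -
  have "T \<noteq> []" using assms by (auto simp: count_in_def)
  then have "count_in C T = count_in C (butlast T) + count_in C [last T]"
    unfolding count_in_conv_length_filter by (metis append_butlast_last_id filter_append length_append)
  moreover have "count_in C [last T] \<le> 1" by (simp add: count_in_conv_length_filter)
  ultimately have "filter (\<lambda>r. r \<in> C) (butlast T) \<noteq> []"
    using assms by (auto simp: count_in_conv_length_filter)
  then show ?thesis by (auto simp: filter_empty_conv)
qed

lemma hurwitz_move_three_to_end:
  assumes "set T \<subseteq> G6" "2 \<le> count_in S_cls T" "2 \<le> count_in Rprime T"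
    and "C \<in> {R1, R1inv, S_cls}" "\<exists>r\<in>set T. r \<in> C"
  shows "\<exists>P b c y. hurwitz_step\<^sup>*\<^sup>* T (P @ [b, c, y]) \<and> b \<in> S_cls \<and> c \<in> Rprime \<and> y \<in> C"
proof -
  obtain y0 where "y0 \<in> set T" "y0 \<in> C" using assms(5) by blast
  then obtain b0 c0 where "{#b0, c0, y0#} \<subseteq># mset T" "b0 \<in> S_cls" "c0 \<in> Rprime"
    using three_entries assms(2-4) by blast
  then have "mset [b0, c0, y0] \<subseteq># mset T" by (simp add: add_mset_commute)
  from hurwitz_moves_to_end[OF this assms(1)[unfolded G6_def] invertible_G6_generators]
  obtain P L where moved: "hurwitz_step\<^sup>*\<^sup>* T (P @ L)"
    and L: "list_all2 (\<lambda>a z. \<exists>g\<in>G6. z = matrix_inv g ** a ** g) [b0, c0, y0] L"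
    unfolding G6_def by blast
  have "length L = 3" using list_all2_lengthD[OF L] by simp
  then obtain b c y where L3: "L = [b, c, y]" by (auto simp: numeral_3_eq_3 length_Suc_conv)
  have "\<exists>g\<in>G6. b = matrix_inv g ** b0 ** g" "\<exists>g\<in>G6. c = matrix_inv g ** c0 ** g"
    "\<exists>g\<in>G6. y = matrix_inv g ** y0 ** g"
    using L unfolding L3 by simp_all
  moreover have "conj_closed G6 S_cls" "conj_closed G6 Rprime" "conj_closed G6 C"
    using conj_closed_G6 assms(4) by auto
  ultimately have "b \<in> S_cls" "c \<in> Rprime" "y \<in> C"
    using \<open>b0 \<in> S_cls\<close> \<open>c0 \<in> Rprime\<close> \<open>y0 \<in> C\<close> unfolding conj_closed_def by blast+
  with moved L3 show ?thesis by blast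
qed

lemma hurwitz_step_butlast_generates:
  assumes "hurwitz_step\<^sup>*\<^sup>* T T'" "set T \<subseteq> G6" "2 \<le> count_in S_cls T" "2 \<le> count_in Rprime T"
  shows "gen_group (set (butlast T')) = G6"
proof -
  have "count_in D T' = count_in D T" if "D \<in> {R1, R1inv, S_cls, Rprime}" for D
    using count_in_hurwitz_step[OF assms(1) conj_closed_G6[OF that, unfolded G6_def]
        invertible_G6_generators assms(2)[unfolded G6_def]] .
  then have "2 \<le> count_in S_cls T'" "2 \<le> count_in Rprime T'" using assms(3,4) by auto
  then obtain a c where "a \<in> S_cls" "c \<in> Rprime" "a \<in> set (butlast T')" "c \<in> set (butlast T')"
    using count_in_butlast by blast
  moreover have "set T' \<subseteq> G6" using hurwitz_step_gen_group assms(1,2) unfolding G6_def by blast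
  then have "set (butlast T') \<subseteq> G6" by (meson in_set_butlastD subset_iff)
  ultimately show ?thesis by (rule gen_group_eq_G6)
qed

theorem proposition3p13:
  fixes T :: "cmat list" and x :: cmat and C :: "cmat set"
  assumes "\<forall>r \<in> set T. r \<in> G6 \<and> is_reflection r"
    and "count_in Rprime T \<ge> 2"
    and "count_in S_cls T \<ge> 2"
    and "C \<in> {R1, R1inv, S_cls}"
    and "x \<in> C"
    and "\<exists>r \<in> set T. r \<in> C"
  shows "\<exists>T' \<in> hurwitz_orbit T. last T' = x \<and> gen_group (set (butlast T')) = G6"
proof -
  have T: "set T \<subseteq> G6" using assms(1) by blast
  obtain P b c y where moved: "hurwitz_step\<^sup>*\<^sup>* T (P @ [b, c, y])"
    and "b \<in> S_cls" "c \<in> Rprime" "y \<in> C"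
    using hurwitz_move_three_to_end[OF T assms(3,2,4,6)] by blast
  then obtain V where V: "hurwitz_step\<^sup>*\<^sup>* [b, c, y] V" "last V = x"
    using hurwitz_tail assms(4,5) by blast
  define T' where "T' = P @ V"
  have orbit: "hurwitz_step\<^sup>*\<^sup>* T T'"
    unfolding T'_def using moved hurwitz_step_append[OF V(1)] by (rule rtranclp_trans)
  have "V \<noteq> []" using hurwitz_step_length[OF V(1)] by auto
  then have "last T' = x" unfolding T'_def using V(2) by simp
  moreover have "gen_group (set (butlast T')) = G6"
    using hurwitz_step_butlast_generates[OF orbit T assms(3,2)] .
  ultimately show ?thesis using orbit unfolding hurwitz_orbit_def by blast
qed

end
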